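(* Let $A$ be a finite nonempty set and $M\subseteq A^A$. Then $\overline{M}=\mathrm{End}\,\mathrm{gQuord}\,M$.
   Context: A relation $\rho\subseteq A^m$ is a generalized quasiorder if it is reflexive ($(a,\dots,a)\in\rho$ for all $a$) and transitive: for every $m\times m$-matrix over $A$ all of whose rows and columns belong to $\rho$, its diagonal belongs to $\rho$. $\mathrm{gQuord}(A)$ denotes the set of all generalized quasiorders on $A$ (of all arities). A unary map $h$ preserves $\rho$ if $(h x_1,\dots,h x_m)\in\rho$ whenever $(x_1,\dots,x_m)\in\rho$. For $M\subseteq A^A$, $\mathrm{gQuord}\,M$ is the set of all $\rho\in\mathrm{gQuord}(A)$ preserved by every $h\in M$; for $Q\subseteq\mathrm{gQuord}(A)$, $\mathrm{End}\,Q$ is the set of all $h\in A^A$ preserving every $\rho\in Q$. A translation of an $n$-ary operation $f$ is a unary map $x\mapsto f(a_1,\dots,a_{i-1},x,a_{i+1},\dots,a_n)$ with fixed $a_j\in A$; $\mathrm{trl}(f)$ is the set of translations ($\{f\}$ for unary $f$); $N^*:=\{f\mid \mathrm{trl}(f)\subseteq N\}$. The u-closure $\overline M$ is the intersection of all monoids $N$ with $M\subseteq N\le A^A$ such that $N^*$ is a clone. *)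

theory Defs
  imports Main
begin

(* The finite nonempty base set A is the universe of a type 'a::finite.
   An m-tuple over A is a list of length m; an m-ary relation is a set of such lists.
   Relations of all arities are represented as pairs (m, rho). *)

definition gquord :: "nat \<Rightarrow> 'a list set \<Rightarrow> bool" where
  "gquord m rho \<longleftrightarrow>
     rho \<subseteq> {xs. length xs = m} \<and>
     (\<forall>a. replicate m a \<in> rho) \<and>
     (\<forall>X :: nat \<Rightarrow> nat \<Rightarrow> 'a.
        (\<forall>i<m. map (\<lambda>j. X i j) [0..<m] \<in> rho) \<and>
        (\<forall>j<m. map (\<lambda>i. X i j) [0..<m] \<in> rho)
        \<longrightarrow> map (\<lambda>i. X i i) [0..<m] \<in> rho)"

definition gQuord_all :: "(nat \<times> 'a list set) set" where
  "gQuord_all = {(m, rho). gquord m rho}"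

definition preserves :: "('a \<Rightarrow> 'a) \<Rightarrow> 'a list set \<Rightarrow> bool" where
  "preserves h rho \<longleftrightarrow> (\<forall>xs\<in>rho. map h xs \<in> rho)"

definition gQuord_of :: "('a \<Rightarrow> 'a) set \<Rightarrow> (nat \<times> 'a list set) set" where
  "gQuord_of M = {(m, rho) \<in> gQuord_all. \<forall>h\<in>M. preserves h rho}"

definition End_of :: "(nat \<times> 'a list set) set \<Rightarrow> ('a \<Rightarrow> 'a) set" where
  "End_of Q = {h. \<forall>(m, rho)\<in>Q. preserves h rho}"

(* Finitary operations: an n-ary operation (n \<ge> 1) is f :: 'a list \<Rightarrow> 'a,
   considered on lists of length n. A set of operations is a predicate C n f. *)

definition trl :: "nat \<Rightarrow> ('a list \<Rightarrow> 'a) \<Rightarrow> ('a \<Rightarrow> 'a) set" where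
  "trl n f = {(\<lambda>x. f (as[i := x])) | i as. i < n \<and> length as = n}"

definition star :: "('a \<Rightarrow> 'a) set \<Rightarrow> nat \<Rightarrow> ('a list \<Rightarrow> 'a) \<Rightarrow> bool" where
  "star N n f \<longleftrightarrow> trl n f \<subseteq> N"

definition is_clone :: "(nat \<Rightarrow> ('a list \<Rightarrow> 'a) \<Rightarrow> bool) \<Rightarrow> bool" where
  "is_clone C \<longleftrightarrow>
     (\<forall>n i. 1 \<le> n \<and> i < n \<longrightarrow> C n (\<lambda>xs. xs ! i)) \<and>
     (\<forall>n k f gs. 1 \<le> n \<and> 1 \<le> k \<and> C n f \<and> length gs = n \<and> (\<forall>g\<in>set gs. C k g)
        \<longrightarrow> C k (\<lambda>xs. f (map (\<lambda>g. g xs) gs)))"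

definition is_monoid :: "('a \<Rightarrow> 'a) set \<Rightarrow> bool" where
  "is_monoid N \<longleftrightarrow> id \<in> N \<and> (\<forall>g\<in>N. \<forall>h\<in>N. g \<circ> h \<in> N)"

definition u_closure :: "('a \<Rightarrow> 'a) set \<Rightarrow> ('a \<Rightarrow> 'a) set" where
  "u_closure M = \<Inter> {N. M \<subseteq> N \<and> is_monoid N \<and> is_clone (star N)}"

end

theory Submission
  imports Defs
begin

text \<open>
  For a generalized quasiorder \<open>\<rho>\<close>, an operation preserves \<open>\<rho>\<close> as soon as all its translations do:
  transitivity allows the arguments to be replaced by tuples of \<open>\<rho>\<close> one at a time. Hence
  \<open>(End Q)\<^sup>*\<close> is the clone \<open>Pol Q\<close>, and \<open>End gQuord M\<close> is one of the monoids whose intersection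
  is the u-closure. Conversely, let \<open>N \<supseteq> M\<close> be such a monoid and list \<open>A\<close> as \<open>e\<close>. The relation
  \<open>{g \<circ> e | g \<in> N}\<close> of arity \<open>|A|\<close> is reflexive because \<open>N\<^sup>*\<close> contains the constants, and
  transitive because a binary operation of \<open>N\<^sup>*\<close> has its diagonal in \<open>N\<close>; it is preserved by \<open>M\<close>,
  and \<open>h\<close> maps \<open>e\<close> into it only if \<open>h \<in> N\<close>.
\<close>

definition preserves_op :: "nat \<Rightarrow> ('a list \<Rightarrow> 'a) \<Rightarrow> nat \<Rightarrow> 'a list set \<Rightarrow> bool" where
  "preserves_op n f m rho \<longleftrightarrow>
     (\<forall>R :: nat \<Rightarrow> nat \<Rightarrow> 'a. (\<forall>j<n. map (R j) [0..<m] \<in> rho)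
        \<longrightarrow> map (\<lambda>l. f (map (\<lambda>j. R j l) [0..<n])) [0..<m] \<in> rho)"

lemma gquord_length: "gquord m rho \<Longrightarrow> xs \<in> rho \<Longrightarrow> length xs = m"
  unfolding gquord_def by auto

lemma gquord_replicate: "gquord m rho \<Longrightarrow> replicate m a \<in> rho"
  unfolding gquord_def by blast

lemma gquord_diagonal:
  assumes "gquord m rho"
    and "\<forall>i<m. map (X i) [0..<m] \<in> rho" and "\<forall>j<m. map (\<lambda>i. X i j) [0..<m] \<in> rho"
  shows "map (\<lambda>i. X i i) [0..<m] \<in> rho"
  using assms unfolding gquord_def by blast

lemma translation_in_trl: "i < n \<Longrightarrow> length as = n \<Longrightarrow> (\<lambda>x. f (as[i := x])) \<in> trl n f"
  unfolding trl_def by blast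

lemma preserves_translation:
  assumes rho: "gquord m rho" and f: "preserves_op n f m rho" and t: "t \<in> trl n f"
  shows "preserves t rho"
  unfolding preserves_def
proof
  fix xs assume xs: "xs \<in> rho"
  obtain i as where t_def: "t = (\<lambda>x. f (as[i := x]))" and i: "i < n" and as: "length as = n"
    using t unfolding trl_def by blast
  have m: "length xs = m" using gquord_length[OF rho xs] .
  define R where "R j l = (if j = i then xs ! l else as ! j)" for j l
  have "map (R i) [0..<m] = xs" "j \<noteq> i \<Longrightarrow> map (R j) [0..<m] = replicate m (as ! j)" for j
    by (auto simp: R_def m intro: nth_equalityI)
  then have "map (R j) [0..<m] \<in> rho" for j
    using xs gquord_replicate[OF rho] by (cases "j = i") simp_all
  then have image: "map (\<lambda>l. f (map (\<lambda>j. R j l) [0..<n])) [0..<m] \<in> rho"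
    using f unfolding preserves_op_def by blast
  have "map (\<lambda>j. R j l) [0..<n] = as[i := xs ! l]" for l
    by (rule nth_equalityI) (simp_all add: R_def as nth_list_update)
  then have "map (\<lambda>l. f (map (\<lambda>j. R j l) [0..<n])) [0..<m] = map t xs"
    by (intro nth_equalityI) (simp_all add: t_def m)
  with image show "map t xs \<in> rho" by simp
qed

lemma translations_preserve_rows_upto:
  assumes rho: "gquord m rho" and trl: "\<forall>t\<in>trl n f. preserves t rho"
  shows "k \<le> n \<Longrightarrow> \<forall>j<k. map (R j) [0..<m] \<in> rho \<Longrightarrow> \<forall>j\<in>{k..<n}. \<forall>l<m. R j l = c j \<Longrightarrow>
    map (\<lambda>l. f (map (\<lambda>j. R j l) [0..<n])) [0..<m] \<in> rho"
proof (induction k arbitrary: R c)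
  case 0
  then have "map (\<lambda>l. f (map (\<lambda>j. R j l) [0..<n])) [0..<m] = replicate m (f (map c [0..<n]))"
    by (intro nth_equalityI) (auto intro!: arg_cong[where f = f])
  then show ?case using gquord_replicate[OF rho] by simp
next
  case (Suc k)
  \<comment> \<open>Row \<open>k\<close> is read at the column index \<open>l\<close>, the earlier rows at the row index \<open>i\<close>. The rows of
    \<open>X\<close> are images of row \<open>k\<close> under a translation, its columns are covered by the induction
    hypothesis, and its diagonal is the goal.\<close>
  define X where
    "X = (\<lambda>i l. f (map (\<lambda>j. if j < k then R j i else if j = k then R k l else c j) [0..<n]))"
  have "map (X i) [0..<m] \<in> rho" for i
  proof -
    define as where "as = map (\<lambda>j. if j < k then R j i else c j) [0..<n]"
    have "(\<lambda>x. f (as[k := x])) \<in> trl n f"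
      using Suc.prems(1) by (intro translation_in_trl) (simp_all add: as_def)
    then have "map (\<lambda>x. f (as[k := x])) (map (R k) [0..<m]) \<in> rho"
      using trl Suc.prems(2) unfolding preserves_def by blast
    moreover have "as[k := x] = map (\<lambda>j. if j < k then R j i else if j = k then x else c j) [0..<n]" for x
      by (auto simp: as_def nth_list_update intro!: nth_equalityI)
    ultimately show ?thesis by (simp add: X_def comp_def)
  qed
  moreover have "map (\<lambda>i. X i l) [0..<m] \<in> rho" for l
    using Suc.IH[of "\<lambda>j i. if j < k then R j i else if j = k then R k l else c j"
        "\<lambda>j. if j = k then R k l else c j"] Suc.prems
    by (simp add: X_def)
  ultimately have "map (\<lambda>i. X i i) [0..<m] \<in> rho"
    using gquord_diagonal[OF rho] by blast
  moreover have "map (\<lambda>i. X i i) [0..<m] = map (\<lambda>l. f (map (\<lambda>j. R j l) [0..<n])) [0..<m]"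
    unfolding X_def using Suc.prems(3) by (auto intro!: map_cong arg_cong[where f = f])
  ultimately show ?case by simp
qed

lemma preserves_op_iff_translations:
  assumes "gquord m rho"
  shows "preserves_op n f m rho \<longleftrightarrow> (\<forall>t\<in>trl n f. preserves t rho)"
proof
  show "preserves_op n f m rho \<Longrightarrow> \<forall>t\<in>trl n f. preserves t rho"
    using assms preserves_translation by blast
  show "\<forall>t\<in>trl n f. preserves t rho \<Longrightarrow> preserves_op n f m rho"
    using translations_preserve_rows_upto[OF assms, of n f n] unfolding preserves_op_def by auto
qed

lemma preserves_op_proj: "i < n \<Longrightarrow> preserves_op n (\<lambda>xs. xs ! i) m rho"
  unfolding preserves_op_def by simp

lemma preserves_op_comp:
  assumes f: "preserves_op n f m rho" and gs: "length gs = n" "\<forall>g\<in>set gs. preserves_op k g m rho"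
  shows "preserves_op k (\<lambda>xs. f (map (\<lambda>g. g xs) gs)) m rho"
  unfolding preserves_op_def
proof (intro allI impI)
  fix R assume R: "\<forall>j<k. map (R j) [0..<m] \<in> rho"
  define S where "S = (\<lambda>j l. (gs ! j) (map (\<lambda>j'. R j' l) [0..<k]))"
  have "map (S j) [0..<m] \<in> rho" if "j < n" for j
    using gs R that nth_mem[of j gs] unfolding preserves_op_def S_def by auto
  then have "map (\<lambda>l. f (map (\<lambda>j. S j l) [0..<n])) [0..<m] \<in> rho"
    using f unfolding preserves_op_def by blast
  moreover have "map (\<lambda>j. S j l) [0..<n] = map (\<lambda>g. g (map (\<lambda>j. R j l) [0..<k])) gs" for l
    using gs(1) by (auto simp: S_def intro!: nth_equalityI)
  ultimately show "map (\<lambda>l. f (map (\<lambda>g. g (map (\<lambda>j. R j l) [0..<k])) gs)) [0..<m] \<in> rho"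
    by simp
qed

lemma is_clone_preserves_op: "is_clone (\<lambda>n f. \<forall>(m, rho)\<in>Q. preserves_op n f m rho)"
  unfolding is_clone_def using preserves_op_proj preserves_op_comp by fast

lemma star_End_of_eq:
  assumes "Q \<subseteq> gQuord_all"
  shows "star (End_of Q) = (\<lambda>n f. \<forall>(m, rho)\<in>Q. preserves_op n f m rho)"
proof (intro ext)
  fix n f
  have "star (End_of Q) n f \<longleftrightarrow> (\<forall>(m, rho)\<in>Q. \<forall>t\<in>trl n f. preserves t rho)"
    unfolding star_def End_of_def by blast
  also have "\<dots> \<longleftrightarrow> (\<forall>(m, rho)\<in>Q. preserves_op n f m rho)"
    using assms preserves_op_iff_translations unfolding gQuord_all_def by fast
  finally show "star (End_of Q) n f \<longleftrightarrow> (\<forall>(m, rho)\<in>Q. preserves_op n f m rho)" .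
qed

lemma is_clone_star_End_of: "Q \<subseteq> gQuord_all \<Longrightarrow> is_clone (star (End_of Q))"
  by (simp add: star_End_of_eq is_clone_preserves_op)

lemma is_monoid_End_of: "is_monoid (End_of Q)"
  unfolding is_monoid_def End_of_def preserves_def by (fastforce simp flip: map_map)

lemma u_closure_subset_End_of_gQuord_of: "u_closure M \<subseteq> End_of (gQuord_of M)"
proof -
  have "M \<subseteq> End_of (gQuord_of M)"
    unfolding End_of_def gQuord_of_def by auto
  moreover have "gQuord_of M \<subseteq> gQuord_all"
    unfolding gQuord_of_def by blast
  then have "is_clone (star (End_of (gQuord_of M)))"
    by (rule is_clone_star_End_of)
  ultimately show ?thesis
    unfolding u_closure_def using is_monoid_End_of by blast
qed

lemma const_in_clone_star:
  assumes "is_clone (star N)"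
  shows "(\<lambda>_. a) \<in> N"
proof -
  have "star N 2 (\<lambda>xs. xs ! 0)"
    using assms unfolding is_clone_def by simp
  moreover have "(\<lambda>x. [a, a][1 := x] ! 0) \<in> trl 2 (\<lambda>xs. xs ! 0)"
    by (rule translation_in_trl) simp_all
  ultimately show ?thesis
    unfolding star_def by auto
qed

lemma diagonal_in_clone_star:
  assumes clone: "is_clone (star N)"
    and F: "\<And>x. F x \<in> N" "\<And>y. (\<lambda>x. F x y) \<in> N"
  shows "(\<lambda>x. F x x) \<in> N"
proof -
  define F2 where "F2 = (\<lambda>xs. F (xs ! 0) (xs ! 1))"
  have "star N 2 F2"
    unfolding star_def
  proof
    fix t assume "t \<in> trl 2 F2"
    then obtain i as where t: "t = (\<lambda>x. F2 (as[i := x]))" and "i < 2" "length as = 2"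
      unfolding trl_def by blast
    then have "t = (\<lambda>x. F x (as ! 1)) \<or> t = F (as ! 0)"
      by (auto simp: F2_def nth_list_update less_2_cases_iff)
    then show "t \<in> N"
      using F by auto
  qed
  moreover have "star N 1 (\<lambda>xs. xs ! 0)"
    using clone unfolding is_clone_def by simp
  ultimately have "star N 1 (\<lambda>xs. F (xs ! 0) (xs ! 0))"
    using clone[unfolded is_clone_def, THEN conjunct2, rule_format,
        of 2 1 F2 "[\<lambda>xs. xs ! 0, \<lambda>xs. xs ! 0]"]
    by (simp add: F2_def)
  moreover have "(\<lambda>x. F ([a][0 := x] ! 0) ([a][0 := x] ! 0)) \<in> trl 1 (\<lambda>xs. F (xs ! 0) (xs ! 0))"
    by (rule translation_in_trl) simp_all
  ultimately show ?thesis
    unfolding star_def by auto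
qed

definition graph_relation :: "'a list \<Rightarrow> ('a \<Rightarrow> 'a) set \<Rightarrow> 'a list set" where
  "graph_relation e N = (\<lambda>g. map g e) ` N"

lemma gquord_graph_relation:
  assumes e: "distinct e" "set e = UNIV" and clone: "is_clone (star N)"
  shows "gquord (length e) (graph_relation e N)"
  unfolding gquord_def
proof (intro conjI allI impI)
  show "graph_relation e N \<subseteq> {xs. length xs = length e}"
    by (auto simp: graph_relation_def)
  show "replicate (length e) a \<in> graph_relation e N" for a
    using const_in_clone_star[OF clone, of a]
    unfolding graph_relation_def
    by (auto intro!: image_eqI[where x = "\<lambda>_. a"] simp: map_replicate_const)
  fix X :: "nat \<Rightarrow> nat \<Rightarrow> 'a"
  assume X: "(\<forall>i<length e. map (X i) [0..<length e] \<in> graph_relation e N) \<and>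
    (\<forall>j<length e. map (\<lambda>i. X i j) [0..<length e] \<in> graph_relation e N)"
  obtain idx where idx: "\<And>x. idx x < length e \<and> e ! idx x = x"
    using e(2) in_set_conv_nth[where xs = e] by (metis UNIV_I)
  have idx_nth: "idx (e ! i) = i" if "i < length e" for i
    using idx[of "e ! i"] e(1) that nth_eq_iff_index_eq by blast
  have in_N: "(\<lambda>x. Y (idx x)) \<in> N" if Y: "map Y [0..<length e] \<in> graph_relation e N" for Y
  proof -
    obtain g where "g \<in> N" and g: "map Y [0..<length e] = map g e"
      using Y unfolding graph_relation_def by blast
    have "Y (idx x) = g x" for x
      using arg_cong[OF g, of "\<lambda>xs. xs ! idx x"] idx[of x] by simp
    then show ?thesis
      using \<open>g \<in> N\<close> by simp
  qed
  have "(\<lambda>x. X (idx x) (idx x)) \<in> N"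
  proof (rule diagonal_in_clone_star[OF clone, where F = "\<lambda>x y. X (idx x) (idx y)"])
    show "(\<lambda>y. X (idx x) (idx y)) \<in> N" for x
      using X idx in_N[of "X (idx x)"] by blast
    show "(\<lambda>x. X (idx x) (idx y)) \<in> N" for y
      using X idx in_N[of "\<lambda>i. X i (idx y)"] by blast
  qed
  moreover have "map (\<lambda>i. X i i) [0..<length e] = map (\<lambda>x. X (idx x) (idx x)) e"
    by (rule nth_equalityI) (simp_all add: idx_nth)
  ultimately show "map (\<lambda>i. X i i) [0..<length e] \<in> graph_relation e N"
    unfolding graph_relation_def by (metis image_eqI)
qed

lemma preserves_graph_relation: "is_monoid N \<Longrightarrow> h \<in> N \<Longrightarrow> preserves h (graph_relation e N)"
  unfolding is_monoid_def preserves_def graph_relation_def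
  by (auto intro: image_eqI[where f = "\<lambda>g. map g e", OF map_map])

lemma map_in_graph_relation_iff: "set e = UNIV \<Longrightarrow> map h e \<in> graph_relation e N \<longleftrightarrow> h \<in> N"
  unfolding graph_relation_def by (simp add: image_iff fun_eq_iff[symmetric])

lemma End_of_gQuord_of_subset:
  fixes N :: "('a::finite \<Rightarrow> 'a) set"
  assumes "M \<subseteq> N" "is_monoid N" "is_clone (star N)"
  shows "End_of (gQuord_of M) \<subseteq> N"
proof
  fix h assume h: "h \<in> End_of (gQuord_of M)"
  obtain e :: "'a list" where e: "distinct e" "set e = UNIV"
    using finite_distinct_list[OF finite_UNIV] by blast
  have "(length e, graph_relation e N) \<in> gQuord_of M"
    using assms gquord_graph_relation[OF e] preserves_graph_relation
    unfolding gQuord_of_def gQuord_all_def by blast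
  moreover have "map id e \<in> graph_relation e N"
    using e(2) assms(2) map_in_graph_relation_iff unfolding is_monoid_def by blast
  ultimately have "map h (map id e) \<in> graph_relation e N"
    using h unfolding End_of_def preserves_def by blast
  then show "h \<in> N"
    by (simp add: map_in_graph_relation_iff[OF e(2)])
qed

theorem theorem4p2:
  fixes M :: "('a::finite \<Rightarrow> 'a) set"
  shows "u_closure M = End_of (gQuord_of M)"
proof
  show "u_closure M \<subseteq> End_of (gQuord_of M)"
    by (rule u_closure_subset_End_of_gQuord_of)
  show "End_of (gQuord_of M) \<subseteq> u_closure M"
    unfolding u_closure_def using End_of_gQuord_of_subset by blast
qed

end
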